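(* Let $\Gamma$ be co-compact (no parabolic elements) and let $\chi_k,\chi_{-k}:\Gamma\to\mathcal U(V)$ be $m$-dimensional unitary multiplier systems of admissible weights $2k$ and $-2k$ respectively, with $\chi_{-k}=\overline{\chi_k}$. Then the associated Ruelle zeta functions satisfy $$R(s;\chi_{-k})R(-s;\chi_{-k})=R(s;\chi_k)R(-s;\chi_k).$$
   Context: $\Gamma\subset\mathrm{SL}(2,\mathbb R)$ is a co-compact Fuchsian group with $-I_2\in\Gamma$. An $m$-dimensional unitary multiplier system of real weight $2k$ is a map $\chi:\Gamma\to\mathcal U(V)$, $\dim V=m$, with $\chi(-I_2)=e^{-2\pi ik}I_V$ and $\chi(\gamma\eta)=\sigma_{2k}(\gamma,\eta)\chi(\gamma)\chi(\eta)$, $\sigma_{2k}$ the standard weight-$2k$ factor system. For ${\rm Re}(s)>1$, $R(s;\chi)=\prod_{P_0}\det(I_m-\chi(P_0)N(P_0)^{-s})$, the product over primitive hyperbolic conjugacy classes $P_0$ of $\Gamma$ with norm $N(P_0)$, meromorphically continued to $\mathbb C$. *)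

theory Defs
  imports "HOL-Complex_Analysis.Complex_Analysis"
begin

type_synonym mat2 = "real^2^2"

definition SL2R :: "mat2 set" where
  "SL2R = {A. det A = 1}"

definition uhp :: "complex set" where
  "uhp = {z. Im z > 0}"

definition mobius :: "mat2 \<Rightarrow> complex \<Rightarrow> complex" where
  "mobius A z = (of_real (A$1$1) * z + of_real (A$1$2)) / (of_real (A$2$1) * z + of_real (A$2$2))"

definition fuchsian_group :: "mat2 set \<Rightarrow> bool" where
  "fuchsian_group G \<longleftrightarrow> G \<subseteq> SL2R \<and> mat 1 \<in> G \<and>
     (\<forall>A\<in>G. \<forall>B\<in>G. A ** B \<in> G) \<and> (\<forall>A\<in>G. matrix_inv A \<in> G) \<and> discrete G"

text \<open>Co-compact: the quotient of the upper half plane by G is compact, i.e. there is a compact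
  subset of the upper half plane meeting every G-orbit.\<close>
definition cocompact :: "mat2 set \<Rightarrow> bool" where
  "cocompact G \<longleftrightarrow> (\<exists>K. compact K \<and> K \<subseteq> uhp \<and> (\<forall>z\<in>uhp. \<exists>g\<in>G. mobius g z \<in> K))"

text \<open>Argument convention -pi <= arg w < pi, and w^r = |w|^r exp(i r arg w).\<close>
definition arg_conv :: "complex \<Rightarrow> real" where
  "arg_conv w = (if Arg w = pi then - pi else Arg w)"

definition cpow_conv :: "complex \<Rightarrow> real \<Rightarrow> complex" where
  "cpow_conv w r = of_real (cmod w powr r) * cis (r * arg_conv w)"

definition jfac :: "mat2 \<Rightarrow> complex \<Rightarrow> complex" where
  "jfac A z = of_real (A$2$1) * z + of_real (A$2$2)"

text \<open>Standard factor system of weight r (independent of z in the upper half plane; evaluated at i).\<close>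
definition sigma :: "real \<Rightarrow> mat2 \<Rightarrow> mat2 \<Rightarrow> complex" where
  "sigma r A B = cpow_conv (jfac A (mobius B \<i>)) r * cpow_conv (jfac B \<i>) r / cpow_conv (jfac (A ** B) \<i>) r"

definition adjoint_mat :: "complex^'m^'m \<Rightarrow> complex^'m^'m" where
  "adjoint_mat U = (\<chi> i j. cnj (U$j$i))"

definition unitary_mat :: "complex^'m^'m \<Rightarrow> bool" where
  "unitary_mat U \<longleftrightarrow> U ** adjoint_mat U = mat 1 \<and> adjoint_mat U ** U = mat 1"

definition conj_mat :: "complex^'m^'m \<Rightarrow> complex^'m^'m" where
  "conj_mat U = (\<chi> i j. cnj (U$i$j))"

definition cscale_mat :: "complex \<Rightarrow> complex^'m^'m \<Rightarrow> complex^'m^'m" where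
  "cscale_mat c U = (\<chi> i j. c * U$i$j)"

definition multiplier_system :: "mat2 set \<Rightarrow> real \<Rightarrow> (mat2 \<Rightarrow> complex^'m^'m) \<Rightarrow> bool" where
  "multiplier_system G r X \<longleftrightarrow>
     (\<forall>g\<in>G. unitary_mat (X g)) \<and>
     X (- mat 1) = cscale_mat (cis (- pi * r)) (mat 1) \<and>
     (\<forall>g\<in>G. \<forall>h\<in>G. X (g ** h) = cscale_mat (sigma r g h) (X g ** X h))"

primrec mpow :: "mat2 \<Rightarrow> nat \<Rightarrow> mat2" where
  "mpow A 0 = mat 1"
| "mpow A (Suc n) = A ** mpow A n"

definition trace2 :: "mat2 \<Rightarrow> real" where
  "trace2 A = A$1$1 + A$2$2"

text \<open>Primitive hyperbolic element, normalised to positive trace: not (plus/minus) a proper power.\<close>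
definition prim_hyp :: "mat2 set \<Rightarrow> mat2 \<Rightarrow> bool" where
  "prim_hyp G P \<longleftrightarrow> P \<in> G \<and> trace2 P > 2 \<and>
     \<not> (\<exists>Q\<in>G. \<exists>n::nat. n \<ge> 2 \<and> (P = mpow Q n \<or> P = - mpow Q n))"

definition conj_class :: "mat2 set \<Rightarrow> mat2 \<Rightarrow> mat2 set" where
  "conj_class G P = {g ** P ** matrix_inv g | g. g \<in> G}"

definition prim_hyp_classes :: "mat2 set \<Rightarrow> mat2 set set" where
  "prim_hyp_classes G = {conj_class G P | P. prim_hyp G P}"

text \<open>Norm N(P) = (larger eigenvalue)^2 for hyperbolic P with trace > 2.\<close>
definition hnorm :: "mat2 \<Rightarrow> real" where
  "hnorm P = ((trace2 P + sqrt (trace2 P ^ 2 - 4)) / 2) ^ 2"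

definition ruelle_factor :: "(mat2 \<Rightarrow> complex^'m^'m) \<Rightarrow> complex \<Rightarrow> mat2 set \<Rightarrow> complex" where
  "ruelle_factor X s C = (let P = (SOME P. P \<in> C) in
      det (mat 1 - cscale_mat ((of_real (hnorm P)) powr (- s)) (X P)))"

text \<open>R is the meromorphic continuation of the Ruelle zeta function: meromorphic on C and equal,
  for Re s > 1, to the (unconditionally convergent) product over primitive hyperbolic classes.\<close>
definition ruelle_zeta :: "mat2 set \<Rightarrow> (mat2 \<Rightarrow> complex^'m^'m) \<Rightarrow> (complex \<Rightarrow> complex) \<Rightarrow> bool" where
  "ruelle_zeta G X R \<longleftrightarrow> R meromorphic_on UNIV \<and>
     (\<forall>s. Re s > 1 \<longrightarrow>
        ((\<lambda>F. \<Prod>C\<in>F. ruelle_factor X s C) \<longlongrightarrow> R s) (finite_subsets_at_top (prim_hyp_classes G)))"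

end

theory Submission
  imports Defs
begin

(* For Re s > 1 the two Euler products agree after reindexing the primitive classes by
   P |-> P^-1.  Indeed chi_-k(P) is the complex conjugate of chi_k(P), transposition turns
   det(I - x conj(U)) into det(I - x adj(U)) with adj the conjugate transpose, and
   chi_k(P^-1) = adj(chi_k(P)) for hyperbolic P because sigma(P, P^-1) = 1.  The factors are well
   defined on conjugacy classes, since chi(g P g^-1) = chi(g) chi(P) adj(chi(g)) for hyperbolic P:
   the winding numbers hidden in sigma(g, P g^-1) sigma(P, g^-1) and sigma(g, g^-1) coincide by a
   sign analysis of lower left matrix entries.  So R(s; chi_-k) = R(s; chi_k) on a half plane,
   hence, both being meromorphic, away from a discrete set, and the functional identity follows. *)

section \<open>Matrices in SL(2, R)\<close>

lemma mat2_mult_entries: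
  fixes A B :: "'a::comm_ring_1^2^2"
  shows "(A ** B)$1$1 = A$1$1 * B$1$1 + A$1$2 * B$2$1"
    and "(A ** B)$1$2 = A$1$1 * B$1$2 + A$1$2 * B$2$2"
    and "(A ** B)$2$1 = A$2$1 * B$1$1 + A$2$2 * B$2$1"
    and "(A ** B)$2$2 = A$2$1 * B$1$2 + A$2$2 * B$2$2"
  by (simp_all add: matrix_matrix_mult_def sum_2)

lemma mat2_eqI:
  fixes A B :: "'a^2^2"
  assumes "A$1$1 = B$1$1" "A$1$2 = B$1$2" "A$2$1 = B$2$1" "A$2$2 = B$2$2"
  shows "A = B"
  using assms by (simp add: vec_eq_iff forall_2)

lemma mat2_one_entries [simp]:
  "(mat 1 :: mat2)$1$1 = 1" "(mat 1 :: mat2)$1$2 = 0"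
  "(mat 1 :: mat2)$2$1 = 0" "(mat 1 :: mat2)$2$2 = 1"
  by (simp_all add: mat_def)

definition adj2 :: "mat2 \<Rightarrow> mat2" where
  "adj2 A = (\<chi> i j. if i = 1 then (if j = 1 then A$2$2 else - A$1$2)
                    else (if j = 1 then - A$2$1 else A$1$1))"

lemma adj2_entries [simp]:
  "adj2 A $1$1 = A$2$2" "adj2 A $1$2 = - A$1$2" "adj2 A $2$1 = - A$2$1" "adj2 A $2$2 = A$1$1"
  by (simp_all add: adj2_def)

lemma adj2_right_inverse: "det A = 1 \<Longrightarrow> A ** adj2 A = mat 1"
  by (rule mat2_eqI) (simp_all add: mat2_mult_entries det_2 algebra_simps)

lemma adj2_left_inverse: "det A = 1 \<Longrightarrow> adj2 A ** A = mat 1"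
  by (rule mat2_eqI) (simp_all add: mat2_mult_entries det_2 algebra_simps)

lemma matrix_inv_eq_adj2:
  assumes "det A = 1"
  shows "matrix_inv A = adj2 A"
  unfolding matrix_inv_def
proof (rule some_equality)
  show "A ** adj2 A = mat 1 \<and> adj2 A ** A = mat 1"
    using adj2_right_inverse adj2_left_inverse assms by blast
next
  fix B assume "A ** B = mat 1 \<and> B ** A = mat 1"
  then have "adj2 A ** (A ** B) = adj2 A" by simp
  then show "B = adj2 A" using adj2_left_inverse[OF assms] by (simp add: matrix_mul_assoc)
qed

lemma adj2_mult: "adj2 (A ** B) = adj2 B ** adj2 A"
  by (rule mat2_eqI) (simp_all add: mat2_mult_entries algebra_simps)

lemma adj2_adj2 [simp]: "adj2 (adj2 A) = A"
  by (rule mat2_eqI) simp_all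

lemma adj2_uminus: "adj2 (- A) = - adj2 A"
  by (rule mat2_eqI) simp_all

lemma adj2_one [simp]: "adj2 (mat 1) = mat 1"
  by (rule mat2_eqI) simp_all

lemma det_adj2: "det (adj2 A) = det A"
  by (simp add: det_2 algebra_simps)

lemma trace2_adj2: "trace2 (adj2 A) = trace2 A"
  by (simp add: trace2_def)

lemma trace2_conj:
  assumes "det g = 1"
  shows "trace2 (g ** P ** adj2 g) = trace2 P"
proof -
  have "trace2 (g ** P ** adj2 g) = (P$1$1 + P$2$2) * (g$1$1 * g$2$2 - g$1$2 * g$2$1)"
    by (simp add: trace2_def mat2_mult_entries algebra_simps)
  then show ?thesis using assms by (simp add: trace2_def det_2)
qed

lemma mpow_commute: "mpow A n ** A = A ** mpow A n"
  by (induction n) (simp_all add: matrix_mul_assoc[symmetric])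

lemma adj2_mpow: "adj2 (mpow A n) = mpow (adj2 A) n"
  by (induction n) (simp_all add: adj2_mult mpow_commute)

lemma fuchsian_group_det: "fuchsian_group G \<Longrightarrow> g \<in> G \<Longrightarrow> det g = 1"
  by (auto simp: fuchsian_group_def SL2R_def)

lemma fuchsian_group_adj2: "fuchsian_group G \<Longrightarrow> g \<in> G \<Longrightarrow> adj2 g \<in> G"
  using matrix_inv_eq_adj2[of g] fuchsian_group_det[of G g] by (auto simp: fuchsian_group_def)

lemma fuchsian_group_mult: "fuchsian_group G \<Longrightarrow> g \<in> G \<Longrightarrow> h \<in> G \<Longrightarrow> g ** h \<in> G"
  by (auto simp: fuchsian_group_def)

lemma fuchsian_group_one: "fuchsian_group G \<Longrightarrow> mat 1 \<in> G"
  by (auto simp: fuchsian_group_def)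

section \<open>Arguments of the automorphy factor\<close>

definition arg_jfac :: "mat2 \<Rightarrow> complex \<Rightarrow> real" where
  "arg_jfac A z = arg_conv (jfac A z)"

lemma arg_jfac_bounds: "- pi \<le> arg_jfac A z" "arg_jfac A z < pi"
  using mpi_less_Arg[of "jfac A z"] Arg_le_pi[of "jfac A z"]
  by (auto simp: arg_jfac_def arg_conv_def)

lemma cis_arg_conv: "w \<noteq> 0 \<Longrightarrow> cis (arg_conv w) = sgn w"
  by (auto simp: arg_conv_def cis_Arg[symmetric] complex_eq_iff)

lemma jfac_nonzero:
  assumes "det A = 1" "Im z > 0"
  shows "jfac A z \<noteq> 0"
proof
  assume j: "jfac A z = 0"
  have "Im (jfac A z) = A$2$1 * Im z" by (simp add: jfac_def)
  then have "A$2$1 = 0" using assms(2) j by simp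
  with j assms(1) show False by (simp add: jfac_def det_2)
qed

lemma Im_mobius_pos:
  assumes "det B = 1" "Im z > 0"
  shows "Im (mobius B z) > 0"
proof -
  have "jfac B z \<noteq> 0" using jfac_nonzero assms by blast
  then have "(Re (jfac B z))\<^sup>2 + (Im (jfac B z))\<^sup>2 > 0"
    by (metis complex_neq_0)
  moreover have "Im (mobius B z) = Im z / ((Re (jfac B z))\<^sup>2 + (Im (jfac B z))\<^sup>2)"
    using assms(1) unfolding mobius_def jfac_def
    by (simp add: Im_divide det_2 algebra_simps power2_eq_square)
  ultimately show ?thesis using assms(2) by simp
qed

lemma jfac_mult:
  assumes "jfac B z \<noteq> 0"
  shows "jfac (A ** B) z = jfac A (mobius B z) * jfac B z"
  using assms unfolding jfac_def mobius_def by (simp add: mat2_mult_entries field_simps)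

lemma mobius_mult:
  assumes "jfac B z \<noteq> 0" "jfac A (mobius B z) \<noteq> 0"
  shows "mobius (A ** B) z = mobius A (mobius B z)"
proof -
  define N where "N = of_real (B$1$1) * z + of_real (B$1$2)"
  define D where "D = jfac B z"
  have D: "D \<noteq> 0" using assms D_def by simp
  have Bz: "mobius B z = N / D" by (simp add: mobius_def N_def D_def jfac_def)
  have num: "of_real (A$1$1) * (N/D) + of_real (A$1$2) = (of_real (A$1$1) * N + of_real (A$1$2) * D) / D"
   and den: "of_real (A$2$1) * (N/D) + of_real (A$2$2) = (of_real (A$2$1) * N + of_real (A$2$2) * D) / D"
    using D by (simp_all add: field_simps)
  have "mobius A (N/D) = (of_real (A$1$1) * N + of_real (A$1$2) * D) / (of_real (A$2$1) * N + of_real (A$2$2) * D)"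
    unfolding mobius_def num den using D by simp
  moreover have "mobius (A ** B) z = (of_real (A$1$1) * N + of_real (A$1$2) * D) / (of_real (A$2$1) * N + of_real (A$2$2) * D)"
    unfolding mobius_def N_def D_def jfac_def by (simp add: mat2_mult_entries algebra_simps)
  ultimately show ?thesis using Bz by simp
qed

lemma jfac_one [simp]: "jfac (mat 1) z = 1"
  by (simp add: jfac_def)

lemma mobius_one [simp]: "mobius (mat 1) z = z"
  by (simp add: mobius_def)

lemma arg_jfac_one [simp]: "arg_jfac (mat 1) z = 0"
  by (simp add: arg_jfac_def arg_conv_def)

lemma cis_arg_jfac_mult:
  assumes "det A = 1" "det B = 1" "Im z > 0"
  shows "cis (arg_jfac A (mobius B z)) * cis (arg_jfac B z) = cis (arg_jfac (A ** B) z)"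
proof -
  have "jfac B z \<noteq> 0" "jfac A (mobius B z) \<noteq> 0"
    using jfac_nonzero Im_mobius_pos assms by blast+
  then show ?thesis
    by (simp add: arg_jfac_def jfac_mult cis_arg_conv sgn_mult)
qed

lemma arg_jfac_sign:
  assumes "det A = 1" "Im z > 0"
  shows "arg_jfac A z > 0 \<longleftrightarrow> A$2$1 > 0"
    and "arg_jfac A z < 0 \<longleftrightarrow> A$2$1 < 0 \<or> (A$2$1 = 0 \<and> A$2$2 < 0)"
proof -
  have Im: "Im (jfac A z) = A$2$1 * Im z" by (simp add: jfac_def)
  have pos: "arg_jfac A z > 0" if "A$2$1 > 0"
  proof -
    have "Im (jfac A z) > 0" using that assms(2) Im by simp
    then have "0 < Arg (jfac A z) \<and> Arg (jfac A z) < pi" using Arg_lt_pi by blast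
    then show ?thesis by (simp add: arg_jfac_def arg_conv_def)
  qed
  have neg: "arg_jfac A z < 0" if "A$2$1 < 0"
  proof -
    have "Im (jfac A z) < 0" using that assms(2) Im by (simp add: mult_neg_pos)
    then show ?thesis using Arg_neg_iff by (auto simp: arg_jfac_def arg_conv_def)
  qed
  have real: "arg_jfac A z = (if A$2$2 > 0 then 0 else - pi)" if "A$2$1 = 0" "A$2$2 \<noteq> 0"
    using that by (auto simp: arg_jfac_def arg_conv_def jfac_def)
  have "A$2$1 = 0 \<Longrightarrow> A$2$2 \<noteq> 0" using assms(1) by (auto simp: det_2)
  then show "arg_jfac A z > 0 \<longleftrightarrow> A$2$1 > 0"
    and "arg_jfac A z < 0 \<longleftrightarrow> A$2$1 < 0 \<or> (A$2$1 = 0 \<and> A$2$2 < 0)"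
    using pos neg real pi_gt_zero by (smt (verit))+
qed

lemma hyperbolic_lower_right_pos:
  fixes A :: mat2
  assumes "det A = 1" "trace2 A > 2" "A$2$1 = 0"
  shows "A$2$2 > 0"
proof (rule ccontr)
  assume "\<not> A$2$2 > 0"
  moreover have "A$1$1 * A$2$2 = 1" using assms by (simp add: det_2)
  ultimately have "A$1$1 < 0" "A$2$2 < 0"
    by (metis zero_less_mult_iff zero_less_one)+
  then show False using assms(2) by (simp add: trace2_def)
qed

lemma sgn_arg_jfac_hyperbolic:
  fixes A :: mat2
  assumes "det A = 1" "trace2 A > 2" "Im z > 0"
  shows "sgn (arg_jfac A z) = sgn (A$2$1)"
  using arg_jfac_sign[OF assms(1,3)] hyperbolic_lower_right_pos[OF assms(1,2)]
  by (auto simp: sgn_real_def)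

section \<open>The factor system in terms of arguments\<close>

lemma cis_sum_winding:
  fixes a b c :: real
  assumes "- pi \<le> a" "a < pi" "- pi \<le> b" "b < pi" "- pi \<le> c" "c < pi"
    and "cis a * cis b = cis c"
  shows "a + b - c = 2 * pi * (of_bool (a > 0 \<and> b > 0 \<and> c < 0) - of_bool (a < 0 \<and> b < 0 \<and> c \<ge> 0))"
proof -
  have "cis (a + b - c) = 1" using assms(7) by (simp add: cis_mult cis_divide[symmetric])
  then have "exp (\<i> * complex_of_real (a + b - c)) = 1" by (simp add: cis_conv_exp)
  then obtain n :: int where n: "a + b - c = pi * (2 * of_int n)"
    by (auto simp: exp_eq_1 algebra_simps)
  have "pi * (2 * of_int n) < pi * 3" "pi * (-3) < pi * (2 * of_int n)"
    using n assms(1-6) by linarith+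
  then have "2 * real_of_int n < 3" "-3 < 2 * real_of_int n"
    using pi_gt_zero mult_less_cancel_left_pos by blast+
  then have "n = -1 \<or> n = 0 \<or> n = 1" by linarith
  then show ?thesis using n assms(1-6) by auto
qed

lemma sigma_arg_jfac:
  fixes A B :: mat2
  assumes "det A = 1" "det B = 1"
  shows "sigma r A B = cis (r * (arg_jfac A (mobius B \<i>) + arg_jfac B \<i> - arg_jfac (A ** B) \<i>))"
proof -
  define a where "a = jfac A (mobius B \<i>)"
  define b where "b = jfac B \<i>"
  have "b \<noteq> 0" "a \<noteq> 0"
    using jfac_nonzero Im_mobius_pos[of B \<i>] assms by (simp_all add: a_def b_def)
  then have ab: "jfac (A ** B) \<i> = a * b" and pos: "cmod a powr r > 0" "cmod b powr r > 0"
    using jfac_mult by (simp_all add: a_def b_def)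
  have "sigma r A B = (of_real (cmod a powr r) * cis (r * arg_conv a)) * (of_real (cmod b powr r) * cis (r * arg_conv b))
      / (of_real (cmod a powr r * cmod b powr r) * cis (r * arg_conv (a * b)))"
    unfolding sigma_def cpow_conv_def ab by (simp add: a_def b_def norm_mult powr_mult)
  also have "\<dots> = cis (r * arg_conv a) * cis (r * arg_conv b) / cis (r * arg_conv (a * b))"
    using pos by (simp add: field_simps)
  also have "\<dots> = cis (r * (arg_conv a + arg_conv b - arg_conv (a * b)))"
    by (simp add: cis_mult cis_divide algebra_simps)
  finally show ?thesis unfolding arg_jfac_def a_def b_def ab .
qed

lemma sigma_one [simp]: "sigma r (mat 1) (mat 1) = 1"
  by (simp add: sigma_arg_jfac)

lemma sigma_nonzero: "det A = 1 \<Longrightarrow> det B = 1 \<Longrightarrow> sigma r A B \<noteq> 0"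
  by (simp add: sigma_arg_jfac)

lemma sgn_conj_lower_left:
  fixes g P :: mat2
  assumes dg: "det g = 1" and dP: "det P = 1" and tr: "trace2 P > 2"
    and signs: "(g$2$1 > 0 \<and> (g ** P)$2$1 \<le> 0) \<or> (g$2$1 < 0 \<and> (g ** P)$2$1 \<ge> 0) \<or> g$2$1 = 0"
  shows "sgn ((g ** P ** adj2 g)$2$1) = sgn (P$2$1)"
proof -
  define c d p q r t where "c = g$2$1" "d = g$2$2" "p = P$1$1" "q = P$1$2" "r = P$2$1" "t = P$2$2"
  define m where "m = (g ** P)$2$1"
  define n where "n = (g ** P ** adj2 g)$2$1"
  have m: "m = c * p + d * r" by (simp add: m_def c_d_p_q_r_t_def mat2_mult_entries)
  have n: "n = r * d * d + (p - t) * c * d - q * c * c"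
    by (simp add: n_def c_d_p_q_r_t_def mat2_mult_entries algebra_simps)
  have "p * t - q * r = 1" using dP by (simp add: det_2 c_d_p_q_r_t_def)
  then have key: "r * n = m * (m - (p + t) * c) + c * c"
    unfolding m n by (simp add: algebra_simps)
  have pt: "p + t > 2" using tr by (simp add: trace2_def c_d_p_q_r_t_def)
  consider "c > 0" "m \<le> 0" | "c < 0" "m \<ge> 0" | "c = 0"
    using signs unfolding m_def c_d_p_q_r_t_def by linarith
  then have "r * n > 0 \<or> (c = 0 \<and> d \<noteq> 0)"
  proof cases
    case 1
    have "(p + t) * c > 0" using 1 pt by simp
    then have "m * (m - (p + t) * c) \<ge> 0" using 1 by (intro mult_nonpos_nonpos) simp_all
    then show ?thesis using key 1 by (simp add: add_nonneg_pos)
  next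
    case 2
    have "(p + t) * c < 0" using 2 pt by (simp add: mult_pos_neg)
    then have "m * (m - (p + t) * c) \<ge> 0" using 2 by simp
    then show ?thesis using key 2 by (simp add: add_nonneg_pos mult_neg_neg)
  next
    case 3
    then show ?thesis using dg by (auto simp: det_2 c_d_p_q_r_t_def)
  qed
  then show ?thesis
  proof
    assume "r * n > 0"
    then show ?thesis unfolding n_def[symmetric] c_d_p_q_r_t_def[symmetric]
      by (auto simp: sgn_if zero_less_mult_iff)
  next
    assume "c = 0 \<and> d \<noteq> 0"
    then have "n = r * d\<^sup>2" "d\<^sup>2 > 0" by (simp_all add: n power2_eq_square[symmetric])
    then show ?thesis unfolding n_def[symmetric] c_d_p_q_r_t_def[symmetric]
      by (auto simp: sgn_if zero_less_mult_iff mult_less_0_iff)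
  qed
qed

(* Both sides are arguments of the same number j(gP, u) = j(g, Pu) j(P, u) = j(Q, gu) j(g, u),
   with Q = g P g^-1, up to their winding terms; these agree by sgn_conj_lower_left. *)
lemma arg_jfac_conj_hyperbolic:
  fixes g P :: mat2
  assumes dg: "det g = 1" and dP: "det P = 1" and tr: "trace2 P > 2" and u: "Im u > 0"
  shows "arg_jfac g (mobius P u) + arg_jfac P u = arg_jfac (g ** P ** adj2 g) (mobius g u) + arg_jfac g u"
proof -
  define Q where "Q = g ** P ** adj2 g"
  define M where "M = g ** P"
  have dQ: "det Q = 1" and dM: "det M = 1" using dg dP by (simp_all add: Q_def M_def det_mul det_adj2)
  have trQ: "trace2 Q > 2" using trace2_conj[OF dg] tr by (simp add: Q_def)
  have uP: "Im (mobius P u) > 0" and ug: "Im (mobius g u) > 0" using Im_mobius_pos dP dg u by blast+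
  have "Q ** g = M"
    by (simp add: Q_def M_def matrix_mul_assoc[symmetric] adj2_left_inverse[OF dg])
  then have "cis (arg_jfac Q (mobius g u)) * cis (arg_jfac g u) = cis (arg_jfac M u)"
    using cis_arg_jfac_mult[OF dQ dg u] by simp
  note wind_Q = cis_sum_winding[OF arg_jfac_bounds arg_jfac_bounds arg_jfac_bounds this]
  have "cis (arg_jfac g (mobius P u)) * cis (arg_jfac P u) = cis (arg_jfac M u)"
    using cis_arg_jfac_mult[OF dg dP u] by (simp add: M_def)
  note wind_P = cis_sum_winding[OF arg_jfac_bounds arg_jfac_bounds arg_jfac_bounds this]
  have sgn_g: "arg_jfac g (mobius P u) > 0 \<longleftrightarrow> arg_jfac g u > 0"
    "arg_jfac g (mobius P u) < 0 \<longleftrightarrow> arg_jfac g u < 0"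
    using arg_jfac_sign[OF dg uP] arg_jfac_sign[OF dg u] by simp_all
  have sgn_M: "arg_jfac M u < 0 \<Longrightarrow> M$2$1 \<le> 0" "\<not> arg_jfac M u < 0 \<Longrightarrow> M$2$1 \<ge> 0"
    using arg_jfac_sign(2)[OF dM u] by auto
  have same_sgn: "sgn (arg_jfac P u) = sgn (arg_jfac Q (mobius g u))"
    if "(g$2$1 > 0 \<and> M$2$1 \<le> 0) \<or> (g$2$1 < 0 \<and> M$2$1 \<ge> 0) \<or> g$2$1 = 0"
    using sgn_arg_jfac_hyperbolic[OF dP tr u] sgn_arg_jfac_hyperbolic[OF dQ trQ ug]
      sgn_conj_lower_left[OF dg dP tr that[unfolded M_def]] by (simp add: Q_def)
  have "(arg_jfac g (mobius P u) > 0 \<and> arg_jfac P u > 0 \<and> arg_jfac M u < 0) \<longleftrightarrow>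
        (arg_jfac Q (mobius g u) > 0 \<and> arg_jfac g u > 0 \<and> arg_jfac M u < 0)"
    using sgn_g same_sgn sgn_M arg_jfac_sign(1)[OF dg u] by (auto simp: sgn_if split: if_splits)
  moreover have "(arg_jfac g (mobius P u) < 0 \<and> arg_jfac P u < 0 \<and> arg_jfac M u \<ge> 0) \<longleftrightarrow>
        (arg_jfac Q (mobius g u) < 0 \<and> arg_jfac g u < 0 \<and> arg_jfac M u \<ge> 0)"
    using sgn_g same_sgn sgn_M arg_jfac_sign(2)[OF dg u] by (auto simp: sgn_if split: if_splits)
  ultimately show ?thesis using wind_P wind_Q by (simp add: Q_def)
qed

lemma sigma_conj_hyperbolic:
  fixes g P :: mat2
  assumes dg: "det g = 1" and dP: "det P = 1" and tr: "trace2 P > 2"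
  shows "sigma r g (P ** adj2 g) * sigma r P (adj2 g) = sigma r g (adj2 g)"
proof -
  define h where "h = adj2 g"
  define u where "u = mobius h \<i>"
  have dh: "det h = 1" using dg by (simp add: h_def det_adj2)
  have u: "Im u > 0" using Im_mobius_pos[OF dh] by (simp add: u_def)
  have jh: "jfac h \<i> \<noteq> 0" using jfac_nonzero[OF dh] by simp
  have Pu: "mobius (P ** h) \<i> = mobius P u"
    using mobius_mult[OF jh] jfac_nonzero[OF dP u] by (simp add: u_def)
  have gu: "mobius g u = \<i>"
    using mobius_mult[OF jh, of g] jfac_nonzero[OF dg u] adj2_right_inverse[OF dg]
    by (simp add: u_def h_def)
  define a where "a = arg_jfac g (mobius P u) + arg_jfac (P ** h) \<i> - arg_jfac (g ** (P ** h)) \<i>"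
  define b where "b = arg_jfac P u + arg_jfac h \<i> - arg_jfac (P ** h) \<i>"
  have "g ** P ** adj2 g = g ** (P ** h)" by (simp add: h_def matrix_mul_assoc)
  then have ab: "a + b = arg_jfac g u + arg_jfac h \<i>"
    using arg_jfac_conj_hyperbolic[OF dg dP tr u] gu by (simp add: a_def b_def)
  have "sigma r g (P ** h) * sigma r P h = cis (r * a) * cis (r * b)"
    using sigma_arg_jfac[OF dg, of "P ** h"] sigma_arg_jfac[OF dP dh] Pu dP dh
    by (simp add: det_mul u_def a_def b_def)
  also have "\<dots> = cis (r * (a + b))" by (simp add: cis_mult distrib_left)
  also have "\<dots> = sigma r g h"
    using sigma_arg_jfac[OF dg dh] adj2_right_inverse[OF dg] by (simp add: ab u_def h_def)
  finally show ?thesis by (simp add: h_def)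
qed

lemma sigma_adj2_hyperbolic:
  fixes P :: mat2
  assumes dP: "det P = 1" and tr: "trace2 P > 2"
  shows "sigma r P (adj2 P) = 1"
proof -
  define u where "u = mobius (adj2 P) \<i>"
  have dP': "det (adj2 P) = 1" using dP by (simp add: det_adj2)
  have u: "Im u > 0" using Im_mobius_pos[OF dP'] by (simp add: u_def)
  have "cis (arg_jfac P u) * cis (arg_jfac (adj2 P) \<i>) = cis (arg_jfac (mat 1) \<i>)"
    using cis_arg_jfac_mult[OF dP dP'] adj2_right_inverse[OF dP] by (simp add: u_def)
  note wind = cis_sum_winding[OF arg_jfac_bounds arg_jfac_bounds arg_jfac_bounds this]
  \<comment> \<open>the lower left entries of P and adj2 P are opposite, so the winding term vanishes\<close>
  have "\<not> (arg_jfac P u < 0 \<and> arg_jfac (adj2 P) \<i> < 0)"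
    using sgn_arg_jfac_hyperbolic[OF dP tr u] sgn_arg_jfac_hyperbolic[OF dP', of \<i>] tr
    by (auto simp: trace2_adj2 sgn_if split: if_splits)
  then have "arg_jfac P u + arg_jfac (adj2 P) \<i> = 0" using wind by simp
  then show ?thesis using sigma_arg_jfac[OF dP dP'] adj2_right_inverse[OF dP] by (simp add: u_def)
qed

section \<open>Multiplier systems\<close>

lemma cscale_mult_left: "cscale_mat c A ** B = cscale_mat c (A ** B)"
  by (simp add: vec_eq_iff cscale_mat_def matrix_matrix_mult_def sum_distrib_left mult.assoc)

lemma cscale_mult_right: "A ** cscale_mat c B = cscale_mat c (A ** B)"
  by (simp add: vec_eq_iff cscale_mat_def matrix_matrix_mult_def sum_distrib_left mult.left_commute)

lemma cscale_cscale: "cscale_mat c (cscale_mat d A) = cscale_mat (c * d) A"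
  by (simp add: vec_eq_iff cscale_mat_def mult.assoc)

lemma cscale_one [simp]: "cscale_mat 1 A = A"
  by (simp add: vec_eq_iff cscale_mat_def)

lemma matrix_diff_ldistrib: "(A::'a::comm_ring_1^'n^'m) ** (B - C) = A ** B - A ** C"
  by (simp add: vec_eq_iff matrix_matrix_mult_def sum_subtractf algebra_simps)

lemma matrix_diff_rdistrib: "((B::'a::comm_ring_1^'n^'m) - C) ** A = B ** A - C ** A"
  by (simp add: vec_eq_iff matrix_matrix_mult_def sum_subtractf algebra_simps)

lemma det_one_minus_cscale_unitary_conj:
  fixes U V :: "complex^'m::finite^'m"
  assumes "unitary_mat U"
  shows "det (mat 1 - cscale_mat x (U ** V ** adjoint_mat U)) = det (mat 1 - cscale_mat x V)"
proof -
  have U: "U ** adjoint_mat U = mat 1" using assms by (simp add: unitary_mat_def)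
  have "mat 1 - cscale_mat x (U ** V ** adjoint_mat U) = U ** (mat 1 - cscale_mat x V) ** adjoint_mat U"
    by (simp add: matrix_diff_ldistrib matrix_diff_rdistrib U cscale_mult_left cscale_mult_right)
  then have "det (mat 1 - cscale_mat x (U ** V ** adjoint_mat U)) = det (mat 1 - cscale_mat x V) * det (U ** adjoint_mat U)"
    by (simp add: det_mul)
  then show ?thesis by (simp add: U)
qed

lemma det_one_minus_cscale_adjoint:
  fixes U :: "complex^'m::finite^'m"
  shows "det (mat 1 - cscale_mat x (adjoint_mat U)) = det (mat 1 - cscale_mat x (conj_mat U))"
proof -
  have "transpose (mat 1 - cscale_mat x (conj_mat U)) = mat 1 - cscale_mat x (adjoint_mat U)"
    by (simp add: vec_eq_iff transpose_def mat_def adjoint_mat_def conj_mat_def cscale_mat_def)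
  then show ?thesis by (metis det_transpose)
qed

context
  fixes G :: "mat2 set" and r :: real and X :: "mat2 \<Rightarrow> complex^'m::finite^'m"
  assumes FG: "fuchsian_group G" and MS: "multiplier_system G r X"
begin

lemma multiplier_unitary: "g \<in> G \<Longrightarrow> unitary_mat (X g)"
  using MS by (simp add: multiplier_system_def)

lemma multiplier_mult: "g \<in> G \<Longrightarrow> h \<in> G \<Longrightarrow> X (g ** h) = cscale_mat (sigma r g h) (X g ** X h)"
  using MS by (simp add: multiplier_system_def)

lemma multiplier_one: "X (mat 1) = mat 1"
proof -
  have I: "mat 1 \<in> G" using fuchsian_group_one[OF FG] .
  have "X (mat 1) = X (mat 1) ** X (mat 1)" using multiplier_mult[OF I I] by simp
  then have "adjoint_mat (X (mat 1)) ** X (mat 1) = (adjoint_mat (X (mat 1)) ** X (mat 1)) ** X (mat 1)"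
    by (metis matrix_mul_assoc)
  then show ?thesis using multiplier_unitary[OF I] by (simp add: unitary_mat_def)
qed

lemma multiplier_adj2:
  assumes g: "g \<in> G"
  shows "X (adj2 g) = cscale_mat (inverse (sigma r g (adj2 g))) (adjoint_mat (X g))"
proof -
  have dg: "det g = 1" using fuchsian_group_det[OF FG g] .
  have nz: "sigma r g (adj2 g) \<noteq> 0" using sigma_nonzero dg det_adj2[of g] by simp
  have "mat 1 = cscale_mat (sigma r g (adj2 g)) (X g ** X (adj2 g))"
    using multiplier_mult[OF g fuchsian_group_adj2[OF FG g]] multiplier_one adj2_right_inverse[OF dg]
    by simp
  then have "adjoint_mat (X g) = adjoint_mat (X g) ** cscale_mat (sigma r g (adj2 g)) (X g ** X (adj2 g))"
    by (metis matrix_mul_rid)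
  also have "\<dots> = cscale_mat (sigma r g (adj2 g)) (X (adj2 g))"
    using multiplier_unitary[OF g] by (simp add: cscale_mult_right matrix_mul_assoc unitary_mat_def)
  finally show ?thesis using nz by (simp add: cscale_cscale)
qed

lemma multiplier_adj2_hyperbolic:
  assumes "P \<in> G" "trace2 P > 2"
  shows "X (adj2 P) = adjoint_mat (X P)"
  using assms by (simp add: multiplier_adj2 sigma_adj2_hyperbolic fuchsian_group_det[OF FG])

lemma multiplier_conj_hyperbolic:
  assumes g: "g \<in> G" and P: "P \<in> G" and tr: "trace2 P > 2"
  shows "X (g ** P ** adj2 g) = X g ** X P ** adjoint_mat (X g)"
proof -
  define h where "h = adj2 g"
  have h: "h \<in> G" using fuchsian_group_adj2[OF FG g] by (simp add: h_def)
  have dg: "det g = 1" and dh: "det h = 1" and dP: "det P = 1"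
    using fuchsian_group_det[OF FG] g h P by blast+
  have "X (g ** P ** adj2 g) = cscale_mat (sigma r g (P ** h)) (X g ** X (P ** h))"
    using multiplier_mult[OF g fuchsian_group_mult[OF FG P h]] by (simp add: h_def matrix_mul_assoc)
  also have "\<dots> = cscale_mat (sigma r g (P ** h) * sigma r P h) (X g ** (X P ** X h))"
    using multiplier_mult[OF P h] by (simp add: cscale_mult_right cscale_cscale)
  also have "\<dots> = cscale_mat (sigma r g h) (X g ** (X P ** cscale_mat (inverse (sigma r g h)) (adjoint_mat (X g))))"
    using multiplier_adj2[OF g] sigma_conj_hyperbolic[OF dg dP tr] by (simp add: h_def)
  also have "\<dots> = X g ** X P ** adjoint_mat (X g)"
    using sigma_nonzero[OF dg dh] by (simp add: cscale_mult_right cscale_cscale matrix_mul_assoc)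
  finally show ?thesis .
qed

end

section \<open>Ruelle zeta functions\<close>

definition ruelle_local_factor :: "(mat2 \<Rightarrow> complex^'m^'m) \<Rightarrow> complex \<Rightarrow> mat2 \<Rightarrow> complex" where
  "ruelle_local_factor X s P = det (mat 1 - cscale_mat (of_real (hnorm P) powr (- s)) (X P))"

lemma ruelle_factor_eq_local_factor: "ruelle_factor X s C = ruelle_local_factor X s (SOME P. P \<in> C)"
  by (simp add: ruelle_factor_def ruelle_local_factor_def Let_def)

lemma hnorm_conj: "det g = 1 \<Longrightarrow> hnorm (g ** P ** adj2 g) = hnorm P"
  by (simp add: hnorm_def trace2_conj)

lemma hnorm_adj2: "hnorm (adj2 P) = hnorm P"
  by (simp add: hnorm_def trace2_adj2)

lemma conj_class_eq_image:
  assumes "fuchsian_group G"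
  shows "conj_class G P = (\<lambda>g. g ** P ** adj2 g) ` G"
  unfolding conj_class_def using matrix_inv_eq_adj2 fuchsian_group_det[OF assms] by force

lemma adj2_image_conj_class:
  assumes "fuchsian_group G"
  shows "adj2 ` conj_class G P = conj_class G (adj2 P)"
  by (simp add: conj_class_eq_image[OF assms] image_image adj2_mult matrix_mul_assoc)

lemma prim_hyp_adj2:
  assumes FG: "fuchsian_group G" and P: "prim_hyp G P"
  shows "prim_hyp G (adj2 P)"
proof -
  have "\<not> (adj2 P = mpow Q n \<or> adj2 P = - mpow Q n)" if "Q \<in> G" "n \<ge> 2" for Q n
  proof
    assume "adj2 P = mpow Q n \<or> adj2 P = - mpow Q n"
    then have "P = mpow (adj2 Q) n \<or> P = - mpow (adj2 Q) n"
      by (metis adj2_adj2 adj2_mpow adj2_uminus)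
    then show False using P fuchsian_group_adj2[OF FG \<open>Q \<in> G\<close>] \<open>n \<ge> 2\<close>
      by (auto simp: prim_hyp_def)
  qed
  then show ?thesis using P fuchsian_group_adj2[OF FG] by (auto simp: prim_hyp_def trace2_adj2)
qed

lemma bij_betw_adj2_prim_hyp_classes:
  assumes FG: "fuchsian_group G"
  shows "bij_betw ((`) adj2) (prim_hyp_classes G) (prim_hyp_classes G)"
proof -
  have "(`) adj2 ` prim_hyp_classes G \<subseteq> prim_hyp_classes G"
    using adj2_image_conj_class[OF FG] prim_hyp_adj2[OF FG]
    by (fastforce simp: prim_hyp_classes_def)
  then show ?thesis by (intro bij_betw_byWitness[where f' = "(`) adj2"]) (simp_all add: image_image)
qed

context
  fixes G :: "mat2 set" and r :: real and X :: "mat2 \<Rightarrow> complex^'m::finite^'m"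
  assumes FG: "fuchsian_group G" and MS: "multiplier_system G r X"
begin

lemma ruelle_local_factor_conj:
  assumes "g \<in> G" "P \<in> G" "trace2 P > 2"
  shows "ruelle_local_factor X s (g ** P ** adj2 g) = ruelle_local_factor X s P"
  using assms
  by (simp add: ruelle_local_factor_def hnorm_conj fuchsian_group_det[OF FG]
      multiplier_conj_hyperbolic[OF FG MS] det_one_minus_cscale_unitary_conj multiplier_unitary[OF FG MS])

lemma ruelle_factor_conj_class:
  assumes P: "prim_hyp G P"
  shows "ruelle_factor X s (conj_class G P) = ruelle_local_factor X s P"
proof -
  have "P \<in> conj_class G P"
    using fuchsian_group_one[OF FG] by (force simp: conj_class_eq_image[OF FG])
  then have "(SOME Q. Q \<in> conj_class G P) \<in> conj_class G P" by (rule someI)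
  then obtain g where "g \<in> G" "(SOME Q. Q \<in> conj_class G P) = g ** P ** adj2 g"
    by (auto simp: conj_class_eq_image[OF FG])
  then show ?thesis
    using P by (simp add: ruelle_factor_eq_local_factor ruelle_local_factor_conj prim_hyp_def)
qed

end

lemma ruelle_factor_conj_multiplier:
  assumes FG: "fuchsian_group G"
    and MS: "multiplier_system G r X" and MS': "multiplier_system G r' Y"
    and conj: "\<forall>g\<in>G. Y g = conj_mat (X g)"
    and C: "C \<in> prim_hyp_classes G"
  shows "ruelle_factor Y s C = ruelle_factor X s (adj2 ` C)"
proof -
  obtain P where P: "prim_hyp G P" and C: "C = conj_class G P"
    using C by (auto simp: prim_hyp_classes_def)
  have "P \<in> G" "trace2 P > 2" using P by (simp_all add: prim_hyp_def)
  then have "ruelle_local_factor Y s P = ruelle_local_factor X s (adj2 P)"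
    using conj by (simp add: ruelle_local_factor_def hnorm_adj2 det_one_minus_cscale_adjoint
        multiplier_adj2_hyperbolic[OF FG MS])
  then show ?thesis
    using P by (simp add: C ruelle_factor_conj_class[OF FG MS'] ruelle_factor_conj_class[OF FG MS]
        adj2_image_conj_class[OF FG] prim_hyp_adj2[OF FG])
qed

lemma tendsto_prod_finite_subsets_reindex:
  assumes "bij_betw h A B"
  shows "((\<lambda>F. \<Prod>x\<in>F. f (h x)) \<longlongrightarrow> L) (finite_subsets_at_top A) \<longleftrightarrow>
         ((\<lambda>F. prod f F) \<longlongrightarrow> L) (finite_subsets_at_top B)"
proof -
  have inj: "inj_on h A" and B: "h ` A = B" using assms by (auto simp: bij_betw_def)
  have "((\<lambda>F. prod f F) \<longlongrightarrow> L) (finite_subsets_at_top B) \<longleftrightarrow>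
        ((\<lambda>F. prod f (h ` F)) \<longlongrightarrow> L) (finite_subsets_at_top A)"
    by (metis inj B filterlim_filtermap filtermap_image_finite_subsets_at_top)
  also have "\<dots> \<longleftrightarrow> ((\<lambda>F. \<Prod>x\<in>F. f (h x)) \<longlongrightarrow> L) (finite_subsets_at_top A)"
    using inj by (intro tendsto_cong eventually_finite_subsets_at_top_weakI)
      (simp add: prod.reindex inj_on_subset)
  finally show ?thesis ..
qed

lemma ruelle_zeta_conj_multiplier_eq:
  assumes FG: "fuchsian_group G"
    and MS: "multiplier_system G r X" and MS': "multiplier_system G r' Y"
    and conj: "\<forall>g\<in>G. Y g = conj_mat (X g)"
    and R: "ruelle_zeta G X R" and R': "ruelle_zeta G Y R'"
    and s: "Re s > 1"
  shows "R' s = R s"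
proof -
  let ?S = "prim_hyp_classes G"
  have "((\<lambda>F. \<Prod>C\<in>F. ruelle_factor X s (adj2 ` C)) \<longlongrightarrow> R s) (finite_subsets_at_top ?S)"
    unfolding tendsto_prod_finite_subsets_reindex[OF bij_betw_adj2_prim_hyp_classes[OF FG],
        of "ruelle_factor X s"]
    using R s by (simp add: ruelle_zeta_def)
  moreover have "\<forall>\<^sub>F F in finite_subsets_at_top ?S.
      (\<Prod>C\<in>F. ruelle_factor X s (adj2 ` C)) = (\<Prod>C\<in>F. ruelle_factor Y s C)"
    using ruelle_factor_conj_multiplier[OF FG MS MS' conj]
    by (intro eventually_finite_subsets_at_top_weakI prod.cong) auto
  ultimately have "((\<lambda>F. \<Prod>C\<in>F. ruelle_factor Y s C) \<longlongrightarrow> R s) (finite_subsets_at_top ?S)"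
    by (rule tendsto_cong[THEN iffD1, rotated])
  moreover have "((\<lambda>F. \<Prod>C\<in>F. ruelle_factor Y s C) \<longlongrightarrow> R' s) (finite_subsets_at_top ?S)"
    using R' s by (simp add: ruelle_zeta_def)
  ultimately show ?thesis using tendsto_unique finite_subsets_at_top_neq_bot by blast
qed

lemma meromorphic_eq_of_eq_on_open:
  fixes f g :: "complex \<Rightarrow> complex"
  assumes "f meromorphic_on UNIV" "g meromorphic_on UNIV"
    and "open U" "c \<in> U" "\<And>s. s \<in> U \<Longrightarrow> f s = g s"
  shows "\<forall>\<^sub>F s in at z. f s = g s"
proof -
  define h where "h = (\<lambda>s. f s - g s)"
  have h: "h meromorphic_on UNIV" unfolding h_def using assms(1,2) by (intro meromorphic_intros)
  have iso: "isolated_singularity_at h w" for w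
    using meromorphic_on_isolated_singularity meromorphic_on_subset[OF h] by blast
  have "\<forall>\<^sub>F w in at c. w \<in> U" using assms(3,4) by (intro eventually_at_in_open')
  then have "\<forall>\<^sub>F w in at c. remove_sings h w = 0"
    using eventually_remove_sings_eq_at[OF iso[of c]]
    by eventually_elim (simp add: h_def assms(5))
  then have h0: "remove_sings h w = 0" for w
    by (intro frequently_eq_meromorphic_imp_constant[OF eventually_frequently
          remove_sings_nicely_meromorphic[OF h]]) auto
  show ?thesis
    using eventually_remove_sings_eq_at[OF iso[of z]] by eventually_elim (metis h0 h_def eq_iff_diff_eq_0)
qed

theorem corollary3p7:
  fixes G :: "mat2 set" and k :: real
    and chi_k chi_mk :: "mat2 \<Rightarrow> complex^'m::finite^'m"
    and R_k R_mk :: "complex \<Rightarrow> complex"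
  assumes "fuchsian_group G" and "cocompact G" and "- mat 1 \<in> G"
    and "multiplier_system G (2 * k) chi_k"
    and "multiplier_system G (- 2 * k) chi_mk"
    and "\<forall>g\<in>G. chi_mk g = conj_mat (chi_k g)"
    and "ruelle_zeta G chi_k R_k"
    and "ruelle_zeta G chi_mk R_mk"
  shows "\<forall>z. \<forall>\<^sub>F s in at z. R_mk s * R_mk (- s) = R_k s * R_k (- s)"
proof
  fix z :: complex
  have "R_mk s = R_k s" if "s \<in> {s. Re s > 1}" for s
    using ruelle_zeta_conj_multiplier_eq[OF assms(1,4,5,6,7,8)] that by simp
  then have eq: "\<forall>\<^sub>F s in at w. R_mk s = R_k s" for w
    using assms(7,8) open_halfspace_Re_gt[of 1]
    by (intro meromorphic_eq_of_eq_on_open[where c = 2]) (auto simp: ruelle_zeta_def)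
  have "\<forall>\<^sub>F s in filtermap uminus (at z). R_mk s = R_k s"
    using eq[of "- z"] by (simp add: filtermap_at_minus)
  then have "\<forall>\<^sub>F s in at z. R_mk (- s) = R_k (- s)" by (simp add: eventually_filtermap)
  with eq[of z] show "\<forall>\<^sub>F s in at z. R_mk s * R_mk (- s) = R_k s * R_k (- s)"
    by eventually_elim simp
qed

end
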